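(* Consider a symmetric instance with $n$ actions, nonnegative sender values, and $2\le k\le n$. Let $\varphi^*_n$ be an optimal direct, persuasive scheme with $n$ signals that is symmetric (with $k=n$); such a scheme exists. The Imitation Scheme $\varphi_{Imi}$ is symmetric, direct and persuasive (with $k$ signals), and $u_{\mathcal S}(\varphi_{Imi})\ge\frac kn\operatorname{OPT}_n$. Moreover, for all $2\le k\le n$ there exists a random-order instance (a single vector of $n$ types, uniformly randomly permuted) with $\operatorname{OPT}_k\le\frac kn\operatorname{OPT}_n$.
   Context: Model: receiver chooses one of actions $[n]$; each action has a type; state $\boldsymbol\theta$ drawn from a known distribution $q$; each type $t$ has receiver value $\rho(t)$ and sender value $\xi(t)$ (here $\xi\ge0$). A scheme with $k$ signals maps states to distributions over $k$ signals; the receiver best-responds to her posterior, ties in favor of the sender. $\operatorname{OPT}_k$ is the maximal sender expected utility over schemes with $k$ signals. Direct: each signal recommends an action; persuasive: for each signal sent with positive probability recommending $i$, $\mathbb E[\rho(\theta_i)\mid\sigma]\ge\mathbb E[\rho(\theta_j)\mid\sigma]$ for all $j$. Symmetric instance: $q_{\boldsymbol\theta}=q_{\boldsymbol\theta'}$ whenever $\boldsymbol\theta'$ is a permutation of $\boldsymbol\theta$. With $(\pi\cdot\boldsymbol\theta)_{\pi(l)}=\theta_l$, a scheme with $k$ signals is symmetric if it is direct, recommends actions $1,\dots,k$, and $\varphi(\pi\cdot\boldsymbol\theta,\pi(i))=\varphi(\boldsymbol\theta,i)$ for all states, $i\in[k]$, and permutations $\pi$ of $[n]$ with $\pi([k])=[k]$.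 Imitation Scheme: given $\boldsymbol\theta$, draw action $i$ from $\varphi^*_n(\boldsymbol\theta,\cdot)$; if $i\in[k]$ recommend $i$, otherwise recommend an action drawn uniformly at random from $[k]$. *)

theory Defs
  imports "HOL-Probability.Probability" "HOL-Combinatorics.Permutations"
begin

text \<open>States are vectors theta :: nat => 'a of types, only theta 0, ..., theta (n-1) matter
  (actions are 0..n-1). q is the prior over states (a pmf with finite support).\<close>

definition symmetric_instance :: "nat \<Rightarrow> (nat \<Rightarrow> 'a) pmf \<Rightarrow> bool" where
  "symmetric_instance n q \<longleftrightarrow> finite (set_pmf q) \<and>
     (\<forall>\<theta> \<pi>. \<pi> permutes {..<n} \<longrightarrow> pmf q (\<theta> \<circ> inv \<pi>) = pmf q \<theta>)"

definition is_scheme :: "nat \<Rightarrow> ((nat \<Rightarrow> 'a) \<Rightarrow> nat pmf) \<Rightarrow> bool" where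
  "is_scheme k \<phi> \<longleftrightarrow> (\<forall>\<theta>. set_pmf (\<phi> \<theta>) \<subseteq> {..<k})"

definition sig_prob :: "(nat \<Rightarrow> 'a) pmf \<Rightarrow> ((nat \<Rightarrow> 'a) \<Rightarrow> nat pmf) \<Rightarrow> nat \<Rightarrow> real" where
  "sig_prob q \<phi> s = measure_pmf.expectation q (\<lambda>\<theta>. pmf (\<phi> \<theta>) s)"

text \<open>Unnormalised posterior expectation of f(theta_i) given signal s
  (i.e. Pr[s] * E[f(theta_i) | s]).\<close>
definition post_val :: "(nat \<Rightarrow> 'a) pmf \<Rightarrow> ('a \<Rightarrow> real) \<Rightarrow> ((nat \<Rightarrow> 'a) \<Rightarrow> nat pmf) \<Rightarrow> nat \<Rightarrow> nat \<Rightarrow> real" where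
  "post_val q f \<phi> s i = measure_pmf.expectation q (\<lambda>\<theta>. pmf (\<phi> \<theta>) s * f (\<theta> i))"

definition best_resp :: "nat \<Rightarrow> (nat \<Rightarrow> 'a) pmf \<Rightarrow> ('a \<Rightarrow> real) \<Rightarrow> ((nat \<Rightarrow> 'a) \<Rightarrow> nat pmf) \<Rightarrow> nat \<Rightarrow> nat set" where
  "best_resp n q \<rho> \<phi> s = {i. i < n \<and> (\<forall>j<n. post_val q \<rho> \<phi> s j \<le> post_val q \<rho> \<phi> s i)}"

text \<open>Sender expected utility of a scheme with k signals; the receiver best-responds,
  ties broken in favour of the sender.\<close>
definition sender_util :: "nat \<Rightarrow> nat \<Rightarrow> (nat \<Rightarrow> 'a) pmf \<Rightarrow> ('a \<Rightarrow> real) \<Rightarrow> ('a \<Rightarrow> real) \<Rightarrow> ((nat \<Rightarrow> 'a) \<Rightarrow> nat pmf) \<Rightarrow> real" where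
  "sender_util n k q \<rho> \<xi> \<phi> = (\<Sum>s<k. Max (post_val q \<xi> \<phi> s ` best_resp n q \<rho> \<phi> s))"

definition OPT :: "nat \<Rightarrow> nat \<Rightarrow> (nat \<Rightarrow> 'a) pmf \<Rightarrow> ('a \<Rightarrow> real) \<Rightarrow> ('a \<Rightarrow> real) \<Rightarrow> real" where
  "OPT n k q \<rho> \<xi> = (SUP \<phi>\<in>{\<phi>. is_scheme k \<phi>}. sender_util n k q \<rho> \<xi> \<phi>)"

text \<open>Direct scheme with k signals: signal i recommends action i (i < k <= n).\<close>
definition direct :: "nat \<Rightarrow> nat \<Rightarrow> ((nat \<Rightarrow> 'a) \<Rightarrow> nat pmf) \<Rightarrow> bool" where
  "direct n k \<phi> \<longleftrightarrow> k \<le> n \<and> is_scheme k \<phi>"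

definition persuasive :: "nat \<Rightarrow> nat \<Rightarrow> (nat \<Rightarrow> 'a) pmf \<Rightarrow> ('a \<Rightarrow> real) \<Rightarrow> ((nat \<Rightarrow> 'a) \<Rightarrow> nat pmf) \<Rightarrow> bool" where
  "persuasive n k q \<rho> \<phi> \<longleftrightarrow> (\<forall>i<k. sig_prob q \<phi> i > 0 \<longrightarrow>
      (\<forall>j<n. post_val q \<rho> \<phi> i j \<le> post_val q \<rho> \<phi> i i))"

definition symmetric_scheme :: "nat \<Rightarrow> nat \<Rightarrow> ((nat \<Rightarrow> 'a) \<Rightarrow> nat pmf) \<Rightarrow> bool" where
  "symmetric_scheme n k \<phi> \<longleftrightarrow> direct n k \<phi> \<and>
     (\<forall>\<theta> \<pi> i. \<pi> permutes {..<n} \<and> \<pi> ` {..<k} = {..<k} \<and> i < k \<longrightarrow>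
        pmf (\<phi> (\<theta> \<circ> inv \<pi>)) (\<pi> i) = pmf (\<phi> \<theta>) i)"

definition imitation :: "nat \<Rightarrow> ((nat \<Rightarrow> 'a) \<Rightarrow> nat pmf) \<Rightarrow> (nat \<Rightarrow> 'a) \<Rightarrow> nat pmf" where
  "imitation k \<phi> \<theta> = bind_pmf (\<phi> \<theta>) (\<lambda>i. if i < k then return_pmf i else pmf_of_set {..<k})"

definition random_order :: "nat \<Rightarrow> (nat \<Rightarrow> 'a) \<Rightarrow> (nat \<Rightarrow> 'a) pmf" where
  "random_order n t = map_pmf (\<lambda>\<pi>. t \<circ> inv \<pi>) (pmf_of_set {\<pi>. \<pi> permutes {..<n}})"

end

theory Submission
  imports Defs
begin

text \<open>Optimal schemes exist because the persuasion linear program has a compact feasible set,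
  and averaging an optimum over all relabellings of the actions makes it symmetric without
  changing its value. In a symmetric scheme all signals look alike: the posterior value of an
  action is \<open>A\<close> if it is the recommended one and \<open>B\<close> otherwise (for the receiver as well as
  for the sender). The Imitation Scheme keeps the recommendations \<open>i < k\<close> and spreads the other
  \<open>n - k\<close> signals uniformly over them. This only mixes in posteriors under which the recommended
  action remains a best response, and every one of the \<open>k\<close> signals is still worth as much to the
  sender as a signal of the optimal scheme, which gives the factor \<open>k/n\<close>. The factor is tight
  for a single unit type placed uniformly at random on which the receiver is indifferent: any
  signal is worth at most the prior mass \<open>1/n\<close> of the unit type at the recommended action.\<close>

lemma expectation_finite_support:
  assumes "finite (set_pmf q)"
  shows "measure_pmf.expectation q g = (\<Sum>x\<in>set_pmf q. pmf q x * g x)"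
  by (subst integral_measure_pmf_real[of "set_pmf q"]) (auto simp: assms mult.commute)

lemma post_val_finite_support:
  assumes "finite (set_pmf q)"
  shows "post_val q f \<phi> s j = (\<Sum>\<theta>\<in>set_pmf q. pmf q \<theta> * (pmf (\<phi> \<theta>) s * f (\<theta> j)))"
  unfolding post_val_def by (rule expectation_finite_support[OF assms])

lemma post_val_eq_0_if_sig_prob_eq_0:
  assumes fin: "finite (set_pmf q)" and "sig_prob q \<phi> s = 0"
  shows "post_val q f \<phi> s j = 0"
proof -
  have "(\<Sum>\<theta>\<in>set_pmf q. pmf q \<theta> * pmf (\<phi> \<theta>) s) = 0"
    using assms unfolding sig_prob_def expectation_finite_support[OF fin] by simp
  then have "\<forall>\<theta>\<in>set_pmf q. pmf q \<theta> * pmf (\<phi> \<theta>) s = 0"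
    using fin by (subst (asm) sum_nonneg_eq_0_iff) auto
  then show ?thesis unfolding post_val_finite_support[OF fin] by (intro sum.neutral) auto
qed

lemma finite_best_resp: "finite (best_resp n q \<rho> \<phi> s)"
  by (rule finite_subset[of _ "{..<n}"]) (auto simp: best_resp_def)

lemma best_resp_nonempty:
  assumes "0 < n"
  shows "best_resp n q \<rho> \<phi> s \<noteq> {}"
proof -
  let ?g = "\<lambda>j. post_val q \<rho> \<phi> s j"
  have "Max (?g ` {..<n}) \<in> ?g ` {..<n}" using assms by (intro Max_in) auto
  then obtain j0 where "j0 < n" "?g j0 = Max (?g ` {..<n})" by auto
  then have "j0 \<in> best_resp n q \<rho> \<phi> s" unfolding best_resp_def by (auto intro: Max_ge)
  then show ?thesis by auto
qed

lemma best_resp_indifferent: "best_resp n q (\<lambda>_. 0) \<phi> s = {..<n}"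
  by (auto simp: best_resp_def post_val_def)

lemma is_scheme_const: "0 < k \<Longrightarrow> is_scheme k (\<lambda>_. return_pmf 0)"
  by (simp add: is_scheme_def)

lemma sender_util_le_OPT:
  assumes "is_scheme k \<phi>" and "\<And>\<psi>. is_scheme k \<psi> \<Longrightarrow> sender_util n k q \<rho> \<xi> \<psi> \<le> M"
  shows "sender_util n k q \<rho> \<xi> \<phi> \<le> OPT n k q \<rho> \<xi>"
  unfolding OPT_def using assms by (intro cSUP_upper bdd_aboveI[where M=M]) auto

lemma OPT_le:
  assumes "0 < k" and "\<And>\<psi>. is_scheme k \<psi> \<Longrightarrow> sender_util n k q \<rho> \<xi> \<psi> \<le> M"
  shows "OPT n k q \<rho> \<xi> \<le> M"
  unfolding OPT_def using assms is_scheme_const[OF assms(1)] by (intro cSUP_least) auto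

lemma symmetric_instance_pmf_comp:
  assumes "symmetric_instance n q" "\<pi> permutes {..<n}"
  shows "pmf q (\<theta> \<circ> \<pi>) = pmf q \<theta>"
  using assms permutes_inv[OF assms(2)] permutes_inv_inv[OF assms(2)]
  unfolding symmetric_instance_def by metis

lemma symmetric_instance_sum_comp:
  assumes "symmetric_instance n q" "\<pi> permutes {..<n}"
  shows "(\<Sum>\<theta>\<in>set_pmf q. pmf q \<theta> * g \<theta>) = (\<Sum>\<theta>\<in>set_pmf q. pmf q \<theta> * g (\<theta> \<circ> \<pi>))"
proof -
  have inv_comp: "\<theta> \<circ> \<pi> \<circ> inv \<pi> = \<theta>" "\<theta> \<circ> inv \<pi> \<circ> \<pi> = \<theta>" for \<theta> :: "nat \<Rightarrow> 'a"
    by (simp_all add: o_assoc[symmetric] permutes_inv_o[OF assms(2)])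
  have "bij_betw (\<lambda>\<theta>. \<theta> \<circ> \<pi>) (set_pmf q) (set_pmf q)"
    using symmetric_instance_pmf_comp[OF assms] symmetric_instance_pmf_comp[OF assms(1) permutes_inv[OF assms(2)]]
    by (intro bij_betwI[where g="\<lambda>\<theta>. \<theta> \<circ> inv \<pi>"]) (auto simp: set_pmf_iff inv_comp)
  from sum.reindex_bij_betw[OF this, of "\<lambda>\<theta>. pmf q \<theta> * g \<theta>"] show ?thesis
    by (simp add: symmetric_instance_pmf_comp[OF assms])
qed

section \<open>Optimal symmetric schemes\<close>

text \<open>The linear program of persuasive direct schemes with \<open>n\<close> signals, where \<open>x (\<theta>, i)\<close> is the
  probability of recommending \<open>i\<close> in state \<open>\<theta>\<close>. As a subset of the product space of all
  functions \<open>x\<close>, the feasible set is compact, so the program has an optimum even though the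
  type of states is arbitrary.\<close>

definition lp_post_val :: "(nat \<Rightarrow> 'a) pmf \<Rightarrow> ('a \<Rightarrow> real) \<Rightarrow> ((nat \<Rightarrow> 'a) \<times> nat \<Rightarrow> real) \<Rightarrow> nat \<Rightarrow> nat \<Rightarrow> real" where
  "lp_post_val q f x s j = (\<Sum>\<theta>\<in>set_pmf q. pmf q \<theta> * (x (\<theta>, s) * f (\<theta> j)))"

definition lp_util :: "nat \<Rightarrow> (nat \<Rightarrow> 'a) pmf \<Rightarrow> ('a \<Rightarrow> real) \<Rightarrow> ((nat \<Rightarrow> 'a) \<times> nat \<Rightarrow> real) \<Rightarrow> real" where
  "lp_util n q \<xi> x = (\<Sum>s<n. lp_post_val q \<xi> x s s)"

definition lp_feasible :: "nat \<Rightarrow> (nat \<Rightarrow> 'a) pmf \<Rightarrow> ('a \<Rightarrow> real) \<Rightarrow> ((nat \<Rightarrow> 'a) \<times> nat \<Rightarrow> real) set" where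
  "lp_feasible n q \<rho> = {x. (\<forall>\<theta> i. 0 \<le> x (\<theta>, i) \<and> x (\<theta>, i) \<le> 1) \<and> (\<forall>\<theta> i. x (\<theta>, n + i) = 0) \<and>
      (\<forall>\<theta>. (\<Sum>i<n. x (\<theta>, i)) = 1) \<and>
      (\<forall>i j. i < n \<and> j < n \<longrightarrow> lp_post_val q \<rho> x i j \<le> lp_post_val q \<rho> x i i)}"

lemma lp_feasible_eq_0:
  assumes "x \<in> lp_feasible n q \<rho>" "n \<le> i"
  shows "x (\<theta>, i) = 0"
  using assms unfolding lp_feasible_def by (metis (mono_tags, lifting) le_Suc_ex mem_Collect_eq)

lemma continuous_on_lp_post_val: "continuous_on UNIV (\<lambda>x. lp_post_val q f x s j)"
  unfolding lp_post_val_def by (intro continuous_intros continuous_on_product_coordinates)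

lemma continuous_on_lp_util: "continuous_on UNIV (lp_util n q \<xi>)"
  unfolding lp_util_def by (intro continuous_intros continuous_on_lp_post_val)

lemma compact_lp_feasible: "compact (lp_feasible n q \<rho>)"
proof -
  have "compact (PiE UNIV (\<lambda>_::((nat \<Rightarrow> 'a) \<times> nat). {0..1::real}))"
    using compactin_PiE[of "\<lambda>_. euclidean" UNIV "\<lambda>_::((nat \<Rightarrow> 'a) \<times> nat). {0..1::real}"]
    by (simp add: euclidean_product_topology compactin_euclidean_iff)
  moreover have "closed {x::((nat \<Rightarrow> 'a) \<times> nat \<Rightarrow> real). (\<forall>\<theta> i. x (\<theta>, n + i) = 0) \<and>
      (\<forall>\<theta>. (\<Sum>i<n. x (\<theta>, i)) = 1) \<and>
      (\<forall>i j. i < n \<and> j < n \<longrightarrow> lp_post_val q \<rho> x i j \<le> lp_post_val q \<rho> x i i)}"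
    by (intro closed_Collect_conj closed_Collect_all closed_Collect_eq closed_Collect_imp
        closed_Collect_le open_Collect_const continuous_on_lp_post_val continuous_intros
        continuous_on_product_coordinates)
  moreover have "lp_feasible n q \<rho> = PiE UNIV (\<lambda>_. {0..1}) \<inter> {x. (\<forall>\<theta> i. x (\<theta>, n + i) = 0) \<and>
      (\<forall>\<theta>. (\<Sum>i<n. x (\<theta>, i)) = 1) \<and>
      (\<forall>i j. i < n \<and> j < n \<longrightarrow> lp_post_val q \<rho> x i j \<le> lp_post_val q \<rho> x i i)}"
    unfolding lp_feasible_def by (auto simp: PiE_iff)
  ultimately show ?thesis by (simp add: compact_Int_closed)
qed

text \<open>Revelation principle: merging all signals whose sender-preferred best response is \<open>i\<close>
  into a recommendation of \<open>i\<close> keeps the sender's utility and makes the scheme persuasive.\<close>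

lemma lp_feasible_of_scheme:
  assumes fin: "finite (set_pmf q)" and n: "0 < n" and sch: "is_scheme n \<psi>"
  shows "\<exists>x\<in>lp_feasible n q \<rho>. sender_util n n q \<rho> \<xi> \<psi> = lp_util n q \<xi> x"
proof -
  have "\<exists>a. a \<in> best_resp n q \<rho> \<psi> s \<and>
      post_val q \<xi> \<psi> s a = Max (post_val q \<xi> \<psi> s ` best_resp n q \<rho> \<psi> s)" for s
    using Max_in[OF finite_imageI[OF finite_best_resp], of "post_val q \<xi> \<psi> s" n q \<rho> \<psi> s]
      best_resp_nonempty[OF n] by (metis (no_types, lifting) image_iff image_is_empty)
  then obtain a where a: "\<And>s. a s \<in> best_resp n q \<rho> \<psi> s"
    "\<And>s. post_val q \<xi> \<psi> s (a s) = Max (post_val q \<xi> \<psi> s ` best_resp n q \<rho> \<psi> s)" by metis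
  have a_less: "a s < n" for s using a(1)[of s] by (auto simp: best_resp_def)
  define x where "x = (\<lambda>(\<theta>, i). \<Sum>s | s < n \<and> a s = i. pmf (\<psi> \<theta>) s)"
  have x: "x (\<theta>, i) = (\<Sum>s | s < n \<and> a s = i. pmf (\<psi> \<theta>) s)" for \<theta> i
    by (simp add: x_def)
  have sum_pmf: "(\<Sum>s<n. pmf (\<psi> \<theta>) s) = 1" for \<theta>
    using sch by (intro sum_pmf_eq_1) (auto simp: is_scheme_def)
  have lp_post_val_x: "lp_post_val q f x i j = (\<Sum>s | s < n \<and> a s = i. post_val q f \<psi> s j)" for f i j
    unfolding lp_post_val_def x post_val_finite_support[OF fin] sum_distrib_left sum_distrib_right
    by (subst sum.swap) (simp add: algebra_simps)
  have "x \<in> lp_feasible n q \<rho>"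
    unfolding lp_feasible_def
  proof (intro CollectI conjI allI impI)
    fix \<theta> i
    show "0 \<le> x (\<theta>, i)" unfolding x by (intro sum_nonneg) auto
    have "x (\<theta>, i) \<le> (\<Sum>s<n. pmf (\<psi> \<theta>) s)" unfolding x by (intro sum_mono2) auto
    then show "x (\<theta>, i) \<le> 1" using sum_pmf by simp
    show "x (\<theta>, n + i) = 0" unfolding x using a_less by (auto intro!: sum.neutral) (metis not_add_less1)
    show "(\<Sum>i<n. x (\<theta>, i)) = 1"
      unfolding x using sum.group[of "{..<n}" "{..<n}" a "\<lambda>s. pmf (\<psi> \<theta>) s"] a_less sum_pmf by auto
  next
    fix i j assume "i < n \<and> j < n"
    then show "lp_post_val q \<rho> x i j \<le> lp_post_val q \<rho> x i i"
      unfolding lp_post_val_x using a(1) by (intro sum_mono) (auto simp: best_resp_def)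
  qed
  moreover have "lp_util n q \<xi> x = (\<Sum>i<n. \<Sum>s | s < n \<and> a s = i. post_val q \<xi> \<psi> s (a s))"
    unfolding lp_util_def lp_post_val_x by (intro sum.cong refl) auto
  then have "lp_util n q \<xi> x = sender_util n n q \<rho> \<xi> \<psi>"
    using sum.group[of "{..<n}" "{..<n}" a "\<lambda>s. post_val q \<xi> \<psi> s (a s)"] a_less
    unfolding sender_util_def a(2) by auto
  ultimately show ?thesis by metis
qed

definition symmetrization :: "nat \<Rightarrow> ((nat \<Rightarrow> 'a) \<times> nat \<Rightarrow> real) \<Rightarrow> (nat \<Rightarrow> 'a) \<times> nat \<Rightarrow> real" where
  "symmetrization n x = (\<lambda>(\<theta>, i). (\<Sum>\<pi> | \<pi> permutes {..<n}. x (\<theta> \<circ> \<pi>, inv \<pi> i)) / card {\<pi>. \<pi> permutes {..<n}})"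

lemma symmetrization_apply:
  "symmetrization n x (\<theta>, i) = (\<Sum>\<pi> | \<pi> permutes {..<n}. x (\<theta> \<circ> \<pi>, inv \<pi> i)) / card {\<pi>. \<pi> permutes {..<n}}"
  by (simp add: symmetrization_def)

lemma card_permutations_pos: "0 < card {\<pi>. \<pi> permutes {..<n::nat}}"
  using finite_permutations[of "{..<n}"] permutes_id[of "{..<n}"] card_gt_0_iff by blast

lemma lp_post_val_symmetrization:
  assumes sym: "symmetric_instance n q"
  shows "lp_post_val q f (symmetrization n x) i j =
    (\<Sum>\<pi> | \<pi> permutes {..<n}. lp_post_val q f x (inv \<pi> i) (inv \<pi> j)) / card {\<pi>. \<pi> permutes {..<n}}"
proof -
  have perm: "(\<Sum>\<theta>\<in>set_pmf q. pmf q \<theta> * (x (\<theta> \<circ> \<pi>, inv \<pi> i) * f (\<theta> j))) = lp_post_val q f x (inv \<pi> i) (inv \<pi> j)"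
    if p: "\<pi> permutes {..<n}" for \<pi>
  proof -
    have "\<theta> \<circ> inv \<pi> \<circ> \<pi> = \<theta>" for \<theta> :: "nat \<Rightarrow> 'a"
      by (simp add: o_assoc[symmetric] permutes_inv_o[OF p])
    then show ?thesis unfolding lp_post_val_def
      using symmetric_instance_sum_comp[OF sym permutes_inv[OF p], of "\<lambda>\<theta>. x (\<theta> \<circ> \<pi>, inv \<pi> i) * f (\<theta> j)"]
      by simp
  qed
  have "lp_post_val q f (symmetrization n x) i j = (\<Sum>\<pi> | \<pi> permutes {..<n}.
      \<Sum>\<theta>\<in>set_pmf q. pmf q \<theta> * (x (\<theta> \<circ> \<pi>, inv \<pi> i) * f (\<theta> j))) / card {\<pi>. \<pi> permutes {..<n}}"
    unfolding lp_post_val_def symmetrization_apply sum_divide_distrib sum_distrib_left sum_distrib_right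
    by (subst sum.swap) (simp add: algebra_simps)
  also have "\<dots> = (\<Sum>\<pi> | \<pi> permutes {..<n}. lp_post_val q f x (inv \<pi> i) (inv \<pi> j)) / card {\<pi>. \<pi> permutes {..<n}}"
    using perm by (intro arg_cong[where f="\<lambda>t. t / _"] sum.cong refl) auto
  finally show ?thesis .
qed

lemma symmetrization_in_lp_feasible:
  assumes sym: "symmetric_instance n q" and x: "x \<in> lp_feasible n q \<rho>"
  shows "symmetrization n x \<in> lp_feasible n q \<rho>"
proof -
  let ?P = "{\<pi>. \<pi> permutes {..<n}}"
  have x_bounds: "0 \<le> x (\<theta>, i)" "x (\<theta>, i) \<le> 1" for \<theta> i using x unfolding lp_feasible_def by auto
  have inv_perm: "inv \<pi> permutes {..<n}" if "\<pi> \<in> ?P" for \<pi> using that permutes_inv by auto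
  show ?thesis
    unfolding lp_feasible_def
  proof (intro CollectI conjI allI impI)
    fix \<theta> i
    show "0 \<le> symmetrization n x (\<theta>, i)"
      unfolding symmetrization_apply using x_bounds by (auto intro!: divide_nonneg_nonneg sum_nonneg)
    have "(\<Sum>\<pi>\<in>?P. x (\<theta> \<circ> \<pi>, inv \<pi> i)) \<le> (\<Sum>\<pi>\<in>?P. 1)" using x_bounds by (intro sum_mono) auto
    then show "symmetrization n x (\<theta>, i) \<le> 1"
      unfolding symmetrization_apply using card_permutations_pos[of n] by (simp add: divide_le_eq)
    have "inv \<pi> (n + i) = n + i" if "\<pi> \<in> ?P" for \<pi>
      using inv_perm[OF that] by (auto intro: permutes_not_in)
    then show "symmetrization n x (\<theta>, n + i) = 0"
      unfolding symmetrization_apply using lp_feasible_eq_0[OF x] by auto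
  next
    fix \<theta>
    have "(\<Sum>i<n. x (\<theta> \<circ> \<pi>, inv \<pi> i)) = 1" if "\<pi> \<in> ?P" for \<pi>
      using sum.permute[OF inv_perm[OF that], of "\<lambda>i. x (\<theta> \<circ> \<pi>, i)"] x
      by (simp add: o_def lp_feasible_def)
    then show "(\<Sum>i<n. symmetrization n x (\<theta>, i)) = 1"
      unfolding symmetrization_apply using card_permutations_pos[of n]
      by (simp add: sum_divide_distrib[symmetric]) (subst sum.swap, simp)
  next
    fix i j assume ij: "i < n \<and> j < n"
    have "lp_post_val q \<rho> x (inv \<pi> i) (inv \<pi> j) \<le> lp_post_val q \<rho> x (inv \<pi> i) (inv \<pi> i)"
      if "\<pi> \<in> ?P" for \<pi>
      using x permutes_in_image[OF inv_perm[OF that]] ij unfolding lp_feasible_def by auto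
    then show "lp_post_val q \<rho> (symmetrization n x) i j \<le> lp_post_val q \<rho> (symmetrization n x) i i"
      unfolding lp_post_val_symmetrization[OF sym]
      by (intro divide_right_mono sum_mono) auto
  qed
qed

lemma lp_util_symmetrization:
  assumes sym: "symmetric_instance n q"
  shows "lp_util n q \<xi> (symmetrization n x) = lp_util n q \<xi> x"
proof -
  let ?P = "{\<pi>. \<pi> permutes {..<n}}"
  have "(\<Sum>s<n. lp_post_val q \<xi> x (inv \<pi> s) (inv \<pi> s)) = lp_util n q \<xi> x" if "\<pi> \<in> ?P" for \<pi>
    using sum.permute[OF permutes_inv, of \<pi> "{..<n}" "\<lambda>s. lp_post_val q \<xi> x s s"] that
    by (simp add: lp_util_def o_def)
  then have "lp_util n q \<xi> (symmetrization n x) = (\<Sum>\<pi>\<in>?P. lp_util n q \<xi> x) / card ?P"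
    unfolding lp_util_def lp_post_val_symmetrization[OF sym] sum_divide_distrib[symmetric]
    by (subst sum.swap) simp
  then show ?thesis using card_permutations_pos[of n] by simp
qed

lemma symmetrization_comp_inv:
  assumes s: "\<sigma> permutes {..<n}"
  shows "symmetrization n x (\<theta> \<circ> inv \<sigma>, \<sigma> i) = symmetrization n x (\<theta>, i)"
proof -
  let ?P = "{\<pi>. \<pi> permutes {..<n}}"
  have "(\<Sum>\<pi>\<in>?P. x (\<theta> \<circ> inv \<sigma> \<circ> \<pi>, inv \<pi> (\<sigma> i))) =
      (\<Sum>\<pi>\<in>?P. x (\<theta> \<circ> inv \<sigma> \<circ> (\<sigma> \<circ> \<pi>), inv (\<sigma> \<circ> \<pi>) (\<sigma> i)))"
    by (rule setum_permutations_compose_left[OF s])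
  also have "\<dots> = (\<Sum>\<pi>\<in>?P. x (\<theta> \<circ> \<pi>, inv \<pi> i))"
  proof (intro sum.cong refl)
    fix \<pi> assume "\<pi> \<in> ?P"
    then have "inv (\<sigma> \<circ> \<pi>) = inv \<pi> \<circ> inv \<sigma>"
      using s by (intro o_inv_distrib) (auto intro: permutes_bij)
    moreover have "\<theta> \<circ> inv \<sigma> \<circ> (\<sigma> \<circ> \<pi>) = \<theta> \<circ> \<pi>"
      by (metis comp_assoc comp_id permutes_inv_o(2) s)
    ultimately show "x (\<theta> \<circ> inv \<sigma> \<circ> (\<sigma> \<circ> \<pi>), inv (\<sigma> \<circ> \<pi>) (\<sigma> i)) = x (\<theta> \<circ> \<pi>, inv \<pi> i)"
      by (simp add: permutes_inverses(2)[OF s])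
  qed
  finally show ?thesis unfolding symmetrization_apply by simp
qed

definition lp_scheme :: "((nat \<Rightarrow> 'a) \<times> nat \<Rightarrow> real) \<Rightarrow> (nat \<Rightarrow> 'a) \<Rightarrow> nat pmf" where
  "lp_scheme x \<theta> = embed_pmf (\<lambda>i. x (\<theta>, i))"

lemma pmf_lp_scheme:
  assumes x: "x \<in> lp_feasible n q \<rho>"
  shows "pmf (lp_scheme x \<theta>) i = x (\<theta>, i)"
proof -
  have "(\<integral>\<^sup>+i. ennreal (x (\<theta>, i)) \<partial>count_space UNIV) = (\<Sum>i<n. ennreal (x (\<theta>, i)))"
    using lp_feasible_eq_0[OF x] by (intro nn_integral_count_space') auto
  also have "\<dots> = 1" using x by (simp add: sum_ennreal lp_feasible_def)
  finally show ?thesis using x unfolding lp_scheme_def lp_feasible_def by (simp add: pmf_embed_pmf)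
qed

lemma is_scheme_lp_scheme: "x \<in> lp_feasible n q \<rho> \<Longrightarrow> is_scheme n (lp_scheme x)"
  by (auto simp: is_scheme_def set_pmf_iff pmf_lp_scheme) (meson lp_feasible_eq_0 not_less)

lemma post_val_lp_scheme:
  assumes "finite (set_pmf q)" "x \<in> lp_feasible n q \<rho>"
  shows "post_val q f (lp_scheme x) s j = lp_post_val q f x s j"
  unfolding post_val_finite_support[OF assms(1)] lp_post_val_def pmf_lp_scheme[OF assms(2)] ..

lemma persuasive_lp_scheme:
  assumes "finite (set_pmf q)" "x \<in> lp_feasible n q \<rho>"
  shows "persuasive n n q \<rho> (lp_scheme x)"
  using assms(2) unfolding persuasive_def post_val_lp_scheme[OF assms] lp_feasible_def by auto

lemma lp_util_le_sender_util:
  assumes "finite (set_pmf q)" "x \<in> lp_feasible n q \<rho>"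
  shows "lp_util n q \<xi> x \<le> sender_util n n q \<rho> \<xi> (lp_scheme x)"
  unfolding lp_util_def sender_util_def
proof (intro sum_mono)
  fix s assume "s \<in> {..<n}"
  then have "s \<in> best_resp n q \<rho> (lp_scheme x) s"
    using assms(2) unfolding best_resp_def post_val_lp_scheme[OF assms] lp_feasible_def by auto
  then show "lp_post_val q \<xi> x s s \<le> Max (post_val q \<xi> (lp_scheme x) s ` best_resp n q \<rho> (lp_scheme x) s)"
    unfolding post_val_lp_scheme[OF assms, symmetric] by (intro Max_ge finite_imageI finite_best_resp) auto
qed

text \<open>An optimum of the linear program bounds every scheme by the revelation principle;
  symmetrizing it keeps it optimal and turns it into a symmetric scheme.\<close>

lemma optimal_symmetric_scheme_exists:
  assumes sym: "symmetric_instance n q" and n: "0 < n"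
  shows "\<exists>\<phi>. symmetric_scheme n n \<phi> \<and> persuasive n n q \<rho> \<phi> \<and>
              sender_util n n q \<rho> \<xi> \<phi> = OPT n n q \<rho> \<xi>"
proof -
  have fin: "finite (set_pmf q)" using sym by (simp add: symmetric_instance_def)
  have "lp_feasible n q \<rho> \<noteq> {}"
    using lp_feasible_of_scheme[OF fin n is_scheme_const[OF n]] by blast
  then obtain x0 where x0: "x0 \<in> lp_feasible n q \<rho>"
    and x0_max: "\<And>y. y \<in> lp_feasible n q \<rho> \<Longrightarrow> lp_util n q \<xi> y \<le> lp_util n q \<xi> x0"
    using continuous_attains_sup[OF compact_lp_feasible _ continuous_on_subset[OF continuous_on_lp_util]]
    by blast
  define x where "x = symmetrization n x0"
  define \<phi> where "\<phi> = lp_scheme x"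
  have x: "x \<in> lp_feasible n q \<rho>" unfolding x_def by (rule symmetrization_in_lp_feasible[OF sym x0])
  have bound: "sender_util n n q \<rho> \<xi> \<psi> \<le> lp_util n q \<xi> x0" if "is_scheme n \<psi>" for \<psi>
    using lp_feasible_of_scheme[OF fin n that, of \<rho> \<xi>] x0_max by auto
  have "symmetric_scheme n n \<phi>"
    using is_scheme_lp_scheme[OF x] symmetrization_comp_inv
    unfolding symmetric_scheme_def direct_def \<phi>_def pmf_lp_scheme[OF x] by (simp add: x_def) blast
  moreover have "persuasive n n q \<rho> \<phi>" unfolding \<phi>_def by (rule persuasive_lp_scheme[OF fin x])
  moreover have "sender_util n n q \<rho> \<xi> \<phi> \<le> OPT n n q \<rho> \<xi>"
    using bound unfolding \<phi>_def by (rule sender_util_le_OPT[OF is_scheme_lp_scheme[OF x]])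
  moreover have "OPT n n q \<rho> \<xi> \<le> lp_util n q \<xi> x0"
    using bound by (rule OPT_le[OF n])
  moreover have "lp_util n q \<xi> x0 \<le> sender_util n n q \<rho> \<xi> \<phi>"
    using lp_util_le_sender_util[OF fin x] lp_util_symmetrization[OF sym] unfolding \<phi>_def x_def by simp
  ultimately show ?thesis by (intro exI[of _ \<phi>]) auto
qed

section \<open>The Imitation Scheme\<close>

lemma post_val_le_post_val_recommended:
  assumes "finite (set_pmf q)" "persuasive n k q \<rho> \<phi>" "i < k" "j < n"
  shows "post_val q \<rho> \<phi> i j \<le> post_val q \<rho> \<phi> i i"
proof (cases "sig_prob q \<phi> i = 0")
  case True
  then show ?thesis using post_val_eq_0_if_sig_prob_eq_0[OF assms(1)] by simp
next
  case False
  have "0 \<le> sig_prob q \<phi> i"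
    unfolding sig_prob_def expectation_finite_support[OF assms(1)] by (intro sum_nonneg) auto
  with False assms(2-4) show ?thesis unfolding persuasive_def by auto
qed

lemma post_val_symmetric_scheme_perm:
  assumes sym: "symmetric_instance n q" and sphi: "symmetric_scheme n n \<phi>"
    and p: "\<pi> permutes {..<n}" and s: "s < n"
  shows "post_val q f \<phi> (\<pi> s) (\<pi> j) = post_val q f \<phi> s j"
proof -
  have fin: "finite (set_pmf q)" using sym by (simp add: symmetric_instance_def)
  have "pmf (\<phi> (\<theta> \<circ> inv \<pi>)) (\<pi> s) = pmf (\<phi> \<theta>) s" for \<theta>
    using sphi p s permutes_image[OF p] unfolding symmetric_scheme_def by blast
  then show ?thesis unfolding post_val_finite_support[OF fin]
    using symmetric_instance_sum_comp[OF sym permutes_inv[OF p], of "\<lambda>\<theta>. pmf (\<phi> \<theta>) (\<pi> s) * f (\<theta> (\<pi> j))"]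
    by (simp add: permutes_inverses(2)[OF p] permutes_inv_inv[OF p])
qed

lemma post_val_symmetric_scheme_diag:
  assumes "symmetric_instance n q" "symmetric_scheme n n \<phi>" "s < n"
  shows "post_val q f \<phi> s s = post_val q f \<phi> 0 0"
  using post_val_symmetric_scheme_perm[OF assms(1,2) permutes_swap_id, of 0 s 0 f 0] assms(3) by simp

lemma post_val_symmetric_scheme_off_diag:
  assumes sym: "symmetric_instance n q" and sphi: "symmetric_scheme n n \<phi>"
    and "s < n" "j < n" "s \<noteq> j"
  shows "post_val q f \<phi> s j = post_val q f \<phi> 0 1"
proof -
  define \<pi>1 where "\<pi>1 = Transposition.transpose 0 s"
  define \<pi>2 where "\<pi>2 = Transposition.transpose (\<pi>1 1) j"
  have "1 < n" using assms(3-5) by linarith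
  then have p1: "\<pi>1 permutes {..<n}" and "\<pi>1 1 < n"
    unfolding \<pi>1_def using assms(3) by (auto intro!: permutes_swap_id simp: Transposition.transpose_def)
  then have "\<pi>2 \<circ> \<pi>1 permutes {..<n}"
    unfolding \<pi>2_def using assms(4) by (intro permutes_compose[OF p1] permutes_swap_id) auto
  moreover have "(\<pi>2 \<circ> \<pi>1) 0 = s" "(\<pi>2 \<circ> \<pi>1) 1 = j"
    unfolding \<pi>2_def \<pi>1_def using assms(5) by (auto simp: Transposition.transpose_def)
  ultimately show ?thesis using post_val_symmetric_scheme_perm[OF sym sphi, of "\<pi>2 \<circ> \<pi>1" 0 f 1] \<open>1 < n\<close>
    by simp
qed

lemma pmf_imitation:
  assumes "set_pmf (\<phi> \<theta>) \<subseteq> {..<n}" "0 < k" "k \<le> n"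
  shows "pmf (imitation k \<phi> \<theta>) i =
    (if i < k then pmf (\<phi> \<theta>) i + (\<Sum>m\<in>{k..<n}. pmf (\<phi> \<theta>) m) / k else 0)"
proof -
  let ?g = "\<lambda>m::nat. if m < k then return_pmf m else pmf_of_set {..<k}"
  have "pmf (imitation k \<phi> \<theta>) i = (\<Sum>m<n. pmf (?g m) i * pmf (\<phi> \<theta>) m)"
    unfolding imitation_def pmf_bind by (rule integral_measure_pmf_real) (use assms(1) in auto)
  also have "\<dots> = (\<Sum>m<k. pmf (?g m) i * pmf (\<phi> \<theta>) m) + (\<Sum>m\<in>{k..<n}. pmf (?g m) i * pmf (\<phi> \<theta>) m)"
    unfolding lessThan_atLeast0 by (rule sum.atLeastLessThan_concat[symmetric]) (use assms in auto)
  also have "(\<Sum>m<k. pmf (?g m) i * pmf (\<phi> \<theta>) m) = (\<Sum>m<k. if m = i then pmf (\<phi> \<theta>) m else 0)"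
    by (intro sum.cong refl) (auto simp: pmf_return)
  also have "(\<Sum>m\<in>{k..<n}. pmf (?g m) i * pmf (\<phi> \<theta>) m) = (\<Sum>m\<in>{k..<n}. (if i < k then 1 / k else 0) * pmf (\<phi> \<theta>) m)"
    using assms(2) by (intro sum.cong refl) (auto simp: indicator_def lessThan_empty_iff)
  finally show ?thesis by (auto simp: sum_distrib_left[symmetric])
qed

lemma is_scheme_imitation:
  assumes "0 < k"
  shows "is_scheme k (imitation k \<phi>)"
proof -
  have "set_pmf (pmf_of_set {..<k}) = {..<k}" using assms by (intro set_pmf_of_set) auto
  then have "set_pmf (if i < k then return_pmf i else pmf_of_set {..<k}) \<subseteq> {..<k}" for i
    by auto
  then show ?thesis unfolding is_scheme_def imitation_def set_bind_pmf by blast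
qed

lemma symmetric_scheme_imitation:
  assumes sphi: "symmetric_scheme n n \<phi>" and k: "0 < k" "k \<le> n"
  shows "symmetric_scheme n k (imitation k \<phi>)"
  unfolding symmetric_scheme_def direct_def
proof (intro conjI allI impI is_scheme_imitation k)
  fix \<theta> \<pi> i assume "\<pi> permutes {..<n} \<and> \<pi> ` {..<k} = {..<k} \<and> i < k"
  then have p: "\<pi> permutes {..<n}" and pk: "\<pi> ` {..<k} = {..<k}" and i: "i < k" by auto
  have set_phi: "set_pmf (\<phi> \<theta>) \<subseteq> {..<n}" for \<theta>
    using sphi by (simp add: symmetric_scheme_def direct_def is_scheme_def)
  have phi_perm: "pmf (\<phi> (\<theta> \<circ> inv \<pi>)) (\<pi> m) = pmf (\<phi> \<theta>) m" if "m < n" for m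
    using sphi p that permutes_image[OF p] unfolding symmetric_scheme_def by blast
  have "{k..<n} = {..<n} - {..<k}" by auto
  then have "\<pi> ` {k..<n} = \<pi> ` {..<n} - \<pi> ` {..<k}"
    using image_set_diff[OF permutes_inj[OF p]] by metis
  then have "\<pi> ` {k..<n} = {k..<n}" using pk permutes_image[OF p] by auto
  then have "(\<Sum>m\<in>{k..<n}. pmf (\<phi> (\<theta> \<circ> inv \<pi>)) m) = (\<Sum>m\<in>\<pi> ` {k..<n}. pmf (\<phi> (\<theta> \<circ> inv \<pi>)) m)"
    by simp
  also have "\<dots> = (\<Sum>m\<in>{k..<n}. pmf (\<phi> \<theta>) m)"
    using phi_perm by (subst sum.reindex) (auto intro: inj_on_subset[OF permutes_inj[OF p]])
  finally have tail: "(\<Sum>m\<in>{k..<n}. pmf (\<phi> (\<theta> \<circ> inv \<pi>)) m) = (\<Sum>m\<in>{k..<n}. pmf (\<phi> \<theta>) m)" .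
  have "\<pi> i < k" "i < n" using pk i k by auto
  then show "pmf (imitation k \<phi> (\<theta> \<circ> inv \<pi>)) (\<pi> i) = pmf (imitation k \<phi> \<theta>) i"
    unfolding pmf_imitation[of \<phi>, OF set_phi k] using i phi_perm[of i] tail by simp
qed

lemma post_val_imitation_eq_sum:
  assumes fin: "finite (set_pmf q)" and set_phi: "\<And>\<theta>. set_pmf (\<phi> \<theta>) \<subseteq> {..<n}"
    and k: "0 < k" "k \<le> n" and i: "i < k"
  shows "post_val q f (imitation k \<phi>) i j = post_val q f \<phi> i j + (\<Sum>m\<in>{k..<n}. post_val q f \<phi> m j) / k"
proof -
  have "post_val q f (imitation k \<phi>) i j = (\<Sum>\<theta>\<in>set_pmf q. pmf q \<theta> * (pmf (\<phi> \<theta>) i * f (\<theta> j)) +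
      (\<Sum>m\<in>{k..<n}. pmf q \<theta> * (pmf (\<phi> \<theta>) m * f (\<theta> j))) / k)"
    unfolding post_val_finite_support[OF fin] pmf_imitation[of \<phi>, OF set_phi k] using i
    by (simp add: sum_divide_distrib sum_distrib_left sum_distrib_right algebra_simps)
  then show ?thesis unfolding post_val_finite_support[OF fin] sum_divide_distrib
    by (simp add: sum.distrib) (rule sum.swap)
qed

text \<open>Signal \<open>i < k\<close> of the imitation is signal \<open>i\<close> of \<open>\<phi>\<close> plus a \<open>1/k\<close> share of each of the
  \<open>n - k\<close> signals \<open>m \<ge> k\<close>; by symmetry, each of these contributes the diagonal value to action \<open>m\<close>
  and the off-diagonal value to every other action.\<close>

lemma post_val_imitation:
  assumes sym: "symmetric_instance n q" and sphi: "symmetric_scheme n n \<phi>"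
    and k: "0 < k" "k \<le> n" and i: "i < k" and j: "j < n"
  shows "post_val q f (imitation k \<phi>) i j =
    (if j = i then post_val q f \<phi> 0 0 + (real n - real k) * post_val q f \<phi> 0 1 / k
     else if j < k then post_val q f \<phi> 0 1 + (real n - real k) * post_val q f \<phi> 0 1 / k
     else post_val q f \<phi> 0 1 + (post_val q f \<phi> 0 0 + (real n - real k - 1) * post_val q f \<phi> 0 1) / k)"
proof -
  let ?A = "post_val q f \<phi> 0 0" and ?B = "post_val q f \<phi> 0 1"
  have fin: "finite (set_pmf q)" using sym by (simp add: symmetric_instance_def)
  have set_phi: "set_pmf (\<phi> \<theta>) \<subseteq> {..<n}" for \<theta>
    using sphi by (simp add: symmetric_scheme_def direct_def is_scheme_def)
  note diag = post_val_symmetric_scheme_diag[OF sym sphi]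
  note off_diag = post_val_symmetric_scheme_off_diag[OF sym sphi]
  have column: "post_val q f \<phi> m j = (if m = j then ?A else ?B)" if "m < n" for m
    using diag[of j] off_diag[of m j] that j by auto
  have "(\<Sum>m\<in>{k..<n}. post_val q f \<phi> m j) = (\<Sum>m\<in>{k..<n}. if m = j then ?A else ?B)"
    using column by (intro sum.cong refl) auto
  also have "\<dots> = (if k \<le> j then ?A + (real n - real k - 1) * ?B else (real n - real k) * ?B)"
  proof (cases "k \<le> j")
    case True
    then have j_in: "j \<in> {k..<n}" using j by simp
    have "(\<Sum>m\<in>{k..<n}. if m = j then ?A else ?B) = ?A + (\<Sum>m\<in>{k..<n} - {j}. ?B)"
      by (subst sum.remove[OF _ j_in]) (auto intro!: sum.cong)
    then show ?thesis using True j_in k by (simp add: of_nat_diff)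
  next
    case False
    then show ?thesis using k by (simp add: of_nat_diff)
  qed
  moreover have "post_val q f \<phi> i j = (if j = i then ?A else ?B)"
    using column[of i] i k by auto
  ultimately show ?thesis
    unfolding post_val_imitation_eq_sum[OF fin set_phi k i] using i by auto
qed

lemma persuasive_imitation:
  assumes sym: "symmetric_instance n q" and sphi: "symmetric_scheme n n \<phi>"
    and pphi: "persuasive n n q \<rho> \<phi>" and k: "0 < k" "k \<le> n"
  shows "persuasive n k q \<rho> (imitation k \<phi>)"
  unfolding persuasive_def
proof (intro allI impI)
  fix i j assume i: "i < k" and j: "j < n"
  let ?A = "post_val q \<rho> \<phi> 0 0" and ?B = "post_val q \<rho> \<phi> 0 1" and ?c = "real n - real k"
  have fin: "finite (set_pmf q)" using sym by (simp add: symmetric_instance_def)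
  show "post_val q \<rho> (imitation k \<phi>) i j \<le> post_val q \<rho> (imitation k \<phi>) i i"
  proof (cases "j = i")
    case False
    then have "1 < n" using i j k by linarith
    then have "?B \<le> ?A" by (intro post_val_le_post_val_recommended[OF fin pphi]) auto
    moreover have "?A + ?c * ?B / k - (?B + (?A + (?c - 1) * ?B) / k) = (1 - 1 / k) * (?A - ?B)"
      using k by (simp add: field_simps)
    moreover have "0 \<le> (1 - 1 / k) * (?A - ?B)"
      using \<open>?B \<le> ?A\<close> k by (intro mult_nonneg_nonneg) auto
    ultimately have imitated: "?B + (?A + (?c - 1) * ?B) / k \<le> ?A + ?c * ?B / k" by linarith
    have recommended: "post_val q \<rho> (imitation k \<phi>) i i = ?A + ?c * ?B / k"
      using post_val_imitation[OF sym sphi k i, of i \<rho>] i k by simp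
    have "post_val q \<rho> (imitation k \<phi>) i j =
        (if j < k then ?B + ?c * ?B / k else ?B + (?A + (?c - 1) * ?B) / k)"
      using post_val_imitation[OF sym sphi k i j, of \<rho>] False by simp
    then show ?thesis
      unfolding recommended using imitated \<open>?B \<le> ?A\<close> by (cases "j < k") auto
  qed simp
qed

text \<open>The sender's value of every signal of a persuasive symmetric scheme: the recommended action
  is a best response, and any other best response forces the receiver to be indifferent.\<close>

definition signal_value :: "(nat \<Rightarrow> 'a) pmf \<Rightarrow> ('a \<Rightarrow> real) \<Rightarrow> ('a \<Rightarrow> real) \<Rightarrow> ((nat \<Rightarrow> 'a) \<Rightarrow> nat pmf) \<Rightarrow> real" where
  "signal_value q \<rho> \<xi> \<phi> = (if post_val q \<rho> \<phi> 0 1 < post_val q \<rho> \<phi> 0 0 then post_val q \<xi> \<phi> 0 0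
     else max (post_val q \<xi> \<phi> 0 0) (post_val q \<xi> \<phi> 0 1))"

lemma Max_post_val_symmetric_scheme_le:
  assumes sym: "symmetric_instance n q" and sphi: "symmetric_scheme n n \<phi>"
    and pphi: "persuasive n n q \<rho> \<phi>" and s: "s < n"
  shows "Max (post_val q \<xi> \<phi> s ` best_resp n q \<rho> \<phi> s) \<le> signal_value q \<rho> \<xi> \<phi>"
proof -
  have fin: "finite (set_pmf q)" using sym by (simp add: symmetric_instance_def)
  have "s \<in> best_resp n q \<rho> \<phi> s"
    using s post_val_le_post_val_recommended[OF fin pphi s] unfolding best_resp_def by auto
  moreover have "post_val q \<xi> \<phi> s j \<le> signal_value q \<rho> \<xi> \<phi>" if j: "j \<in> best_resp n q \<rho> \<phi> s" for j
  proof (cases "j = s")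
    case True
    then show ?thesis
      using post_val_symmetric_scheme_diag[OF sym sphi s] by (auto simp: signal_value_def)
  next
    case False
    then show ?thesis
      using j s post_val_symmetric_scheme_diag[OF sym sphi s]
        post_val_symmetric_scheme_off_diag[OF sym sphi s, of j]
      by (auto simp: best_resp_def signal_value_def)
  qed
  ultimately show ?thesis by (subst Max_le_iff) (auto intro: finite_best_resp)
qed

lemma signal_value_le_Max_imitation:
  assumes sym: "symmetric_instance n q" and sphi: "symmetric_scheme n n \<phi>"
    and pphi: "persuasive n n q \<rho> \<phi>" and \<xi>: "\<forall>t. 0 \<le> \<xi> t"
    and k: "2 \<le> k" "k \<le> n" and i: "i < k"
  shows "signal_value q \<rho> \<xi> \<phi> \<le> Max (post_val q \<xi> (imitation k \<phi>) i ` best_resp n q \<rho> (imitation k \<phi>) i)"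
proof -
  let ?\<psi> = "imitation k \<phi>" and ?c = "real n - real k"
  let ?M = "Max (post_val q \<xi> ?\<psi> i ` best_resp n q \<rho> ?\<psi> i)"
  have fin: "finite (set_pmf q)" using sym by (simp add: symmetric_instance_def)
  have k0: "0 < k" using k by simp
  note post_val_\<psi> = post_val_imitation[OF sym sphi k0 k(2) i]
  have Max_ge_post_val: "post_val q \<xi> ?\<psi> i j \<le> ?M" if "j \<in> best_resp n q \<rho> ?\<psi> i" for j
    using that by (intro Max_ge finite_imageI finite_best_resp) auto
  have "0 \<le> post_val q \<xi> \<phi> 0 1"
    unfolding post_val_finite_support[OF fin] using \<xi> by (intro sum_nonneg mult_nonneg_nonneg) auto
  then have tail_nonneg: "0 \<le> ?c * post_val q \<xi> \<phi> 0 1 / k" using k by simp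
  have i_best: "i \<in> best_resp n q \<rho> ?\<psi> i"
    using i k post_val_le_post_val_recommended[OF fin persuasive_imitation[OF sym sphi pphi k0 k(2)] i]
    unfolding best_resp_def by auto
  have "post_val q \<xi> ?\<psi> i i = post_val q \<xi> \<phi> 0 0 + ?c * post_val q \<xi> \<phi> 0 1 / k"
    using post_val_\<psi>[of i \<xi>] i k by simp
  then have "post_val q \<xi> \<phi> 0 0 \<le> post_val q \<xi> ?\<psi> i i" using tail_nonneg by linarith
  also have "\<dots> \<le> ?M" by (rule Max_ge_post_val[OF i_best])
  finally have A_le: "post_val q \<xi> \<phi> 0 0 \<le> ?M" .
  show ?thesis
  proof (cases "post_val q \<rho> \<phi> 0 1 < post_val q \<rho> \<phi> 0 0")
    case True
    then show ?thesis using A_le by (simp add: signal_value_def)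
  next
    case False
    define j where "j = (if i = 0 then 1 else (0::nat))"
    have j: "j < k" "j \<noteq> i" using k by (auto simp: j_def)
    have "post_val q \<rho> \<phi> 0 1 \<le> post_val q \<rho> \<phi> 0 0"
      using k by (intro post_val_le_post_val_recommended[OF fin pphi]) auto
    then have indifferent: "post_val q \<rho> \<phi> 0 1 = post_val q \<rho> \<phi> 0 0" using False by simp
    have "post_val q \<rho> ?\<psi> i j' = post_val q \<rho> \<phi> 0 0 + ?c * post_val q \<rho> \<phi> 0 0 / k"
      if "j' < n" for j'
      using post_val_\<psi>[OF that, of \<rho>] k unfolding indifferent by (auto simp: field_simps)
    then have "j \<in> best_resp n q \<rho> ?\<psi> i"
      using j k unfolding best_resp_def by auto
    have "post_val q \<xi> ?\<psi> i j = post_val q \<xi> \<phi> 0 1 + ?c * post_val q \<xi> \<phi> 0 1 / k"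
      using post_val_\<psi>[of j \<xi>] j k by simp
    then have "post_val q \<xi> \<phi> 0 1 \<le> post_val q \<xi> ?\<psi> i j" using tail_nonneg by linarith
    also have "\<dots> \<le> ?M" by (rule Max_ge_post_val) fact
    finally have "post_val q \<xi> \<phi> 0 1 \<le> ?M" .
    then show ?thesis using A_le False by (simp add: signal_value_def)
  qed
qed

lemma sender_util_imitation_ge:
  assumes sym: "symmetric_instance n q" and sphi: "symmetric_scheme n n \<phi>"
    and pphi: "persuasive n n q \<rho> \<phi>" and \<xi>: "\<forall>t. 0 \<le> \<xi> t" and k: "2 \<le> k" "k \<le> n"
  shows "real k / real n * sender_util n n q \<rho> \<xi> \<phi> \<le> sender_util n k q \<rho> \<xi> (imitation k \<phi>)"
proof -
  let ?M = "signal_value q \<rho> \<xi> \<phi>"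
  have "sender_util n n q \<rho> \<xi> \<phi> \<le> real n * ?M"
    unfolding sender_util_def
    using sum_bounded_above[of "{..<n}" _ ?M] Max_post_val_symmetric_scheme_le[OF sym sphi pphi] by auto
  then have "real k / real n * sender_util n n q \<rho> \<xi> \<phi> \<le> real k / real n * (real n * ?M)"
    by (intro mult_left_mono) auto
  also have "\<dots> = real k * ?M" using k by simp
  also have "\<dots> \<le> sender_util n k q \<rho> \<xi> (imitation k \<phi>)"
    unfolding sender_util_def
    using sum_bounded_below[of "{..<k}" ?M] signal_value_le_Max_imitation[OF sym sphi pphi \<xi> k] by auto
  finally show ?thesis .
qed

section \<open>A tight random-order instance\<close>

lemma set_pmf_of_set_permutations:
  "set_pmf (pmf_of_set {\<pi>. \<pi> permutes {..<n::nat}}) = {\<pi>. \<pi> permutes {..<n}}"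
  using finite_permutations[of "{..<n}"] permutes_id[of "{..<n}"] by (intro set_pmf_of_set) blast+

lemma random_order_comp_inv:
  assumes s: "\<sigma> permutes {..<n}"
  shows "map_pmf (\<lambda>\<theta>. \<theta> \<circ> inv \<sigma>) (random_order n t) = random_order n t"
proof -
  let ?P = "{\<pi>. \<pi> permutes {..<n}}"
  have fin: "finite ?P" and ne: "?P \<noteq> {}"
    using finite_permutations[of "{..<n}"] permutes_id[of "{..<n}"] by blast+
  have "map_pmf (\<lambda>\<theta>. \<theta> \<circ> inv \<sigma>) (random_order n t) = map_pmf (\<lambda>\<pi>. t \<circ> inv (\<sigma> \<circ> \<pi>)) (pmf_of_set ?P)"
    unfolding random_order_def map_pmf_comp
  proof (intro map_pmf_cong refl)
    fix \<pi> assume "\<pi> \<in> set_pmf (pmf_of_set ?P)"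
    then have "\<pi> permutes {..<n}" by (simp add: set_pmf_of_set_permutations)
    then have "inv (\<sigma> \<circ> \<pi>) = inv \<pi> \<circ> inv \<sigma>"
      using s by (intro o_inv_distrib) (auto intro: permutes_bij)
    then show "t \<circ> inv \<pi> \<circ> inv \<sigma> = t \<circ> inv (\<sigma> \<circ> \<pi>)" by (simp add: o_assoc)
  qed
  also have "\<dots> = map_pmf (\<lambda>\<pi>. t \<circ> inv \<pi>) (map_pmf ((\<circ>) \<sigma>) (pmf_of_set ?P))"
    by (simp add: map_pmf_comp)
  also have "map_pmf ((\<circ>) \<sigma>) (pmf_of_set ?P) = pmf_of_set ((\<circ>) \<sigma> ` ?P)"
    using fin ne by (intro map_pmf_of_set_inj)
      (metis (no_types, lifting) inj_onI o_assoc permutes_inv_o(2) s id_comp)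
  also have "(\<circ>) \<sigma> ` ?P = ?P" using image_compose_permutations_left[OF s] by blast
  finally show ?thesis unfolding random_order_def .
qed

lemma finite_set_pmf_random_order: "finite (set_pmf (random_order n t))"
  unfolding random_order_def by (simp add: set_pmf_of_set_permutations finite_permutations)

lemma symmetric_instance_random_order: "symmetric_instance n (random_order n t)"
  unfolding symmetric_instance_def
proof (intro conjI allI impI finite_set_pmf_random_order)
  fix \<theta> :: "nat \<Rightarrow> 'a" and \<sigma> assume s: "\<sigma> permutes {..<n}"
  have "inj (\<lambda>\<theta>::nat \<Rightarrow> 'a. \<theta> \<circ> inv \<sigma>)"
    by (rule injI) (metis comp_assoc comp_id permutes_inv_o(2)[OF s])
  from pmf_map_inj'[OF this, of "random_order n t" \<theta>]
  show "pmf (random_order n t) (\<theta> \<circ> inv \<sigma>) = pmf (random_order n t) \<theta>"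
    unfolding random_order_comp_inv[OF s] .
qed

lemma set_pmf_random_order:
  assumes "\<theta> \<in> set_pmf (random_order n t)"
  obtains \<pi> where "\<pi> permutes {..<n}" "\<theta> = t \<circ> inv \<pi>"
  using assms that unfolding random_order_def by (auto simp: set_pmf_of_set_permutations)

definition unit_types :: "nat \<Rightarrow> real" where
  "unit_types i = (if i = 0 then 1 else 0)"

lemma set_pmf_random_order_unit_types:
  assumes "\<theta> \<in> set_pmf (random_order n unit_types)" and n: "0 < n"
  obtains p where "p < n" "\<theta> = (\<lambda>j. if j = p then 1 else 0)"
proof -
  obtain \<pi> where p: "\<pi> permutes {..<n}" and \<theta>: "\<theta> = unit_types \<circ> inv \<pi>"
    using assms(1) by (rule set_pmf_random_order)
  have "inv \<pi> j = 0 \<longleftrightarrow> j = \<pi> 0" for j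
    using permutes_inverses[OF p] by metis
  then have "\<theta> = (\<lambda>j. if j = \<pi> 0 then 1 else 0)" by (auto simp: \<theta> unit_types_def)
  moreover have "\<pi> 0 < n" using permutes_in_image[OF p, of 0] n by simp
  ultimately show ?thesis using that by blast
qed

lemma sum_pmf_abs_random_order_unit_types:
  assumes j: "j < n"
  defines "q \<equiv> random_order n unit_types"
  shows "(\<Sum>\<theta>\<in>set_pmf q. pmf q \<theta> * \<bar>\<theta> j\<bar>) = 1 / n"
proof -
  let ?e = "\<lambda>j. \<Sum>\<theta>\<in>set_pmf q. pmf q \<theta> * \<bar>\<theta> j\<bar>"
  have sym: "symmetric_instance n q" unfolding q_def by (rule symmetric_instance_random_order)
  have fin: "finite (set_pmf q)" using sym by (simp add: symmetric_instance_def)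
  have n: "0 < n" using j by simp
  have e_eq: "?e j = ?e 0" if "j < n" for j
    using symmetric_instance_sum_comp[OF sym permutes_swap_id[of 0 "{..<n}" j], of "\<lambda>\<theta>. \<bar>\<theta> j\<bar>"] that n
    by simp
  have "(\<Sum>j<n. \<bar>\<theta> j\<bar>) = 1" if "\<theta> \<in> set_pmf q" for \<theta>
    using that n unfolding q_def
  proof (rule set_pmf_random_order_unit_types)
    fix p assume "p < n" "\<theta> = (\<lambda>j. if j = p then 1 else 0)"
    then have "(\<Sum>j<n. \<bar>\<theta> j\<bar>) = (\<Sum>j<n. if j = p then 1 else 0)" by (intro sum.cong) auto
    then show ?thesis using \<open>p < n\<close> by simp
  qed
  then have "(\<Sum>j<n. ?e j) = (\<Sum>\<theta>\<in>set_pmf q. pmf q \<theta>)"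
    by (subst sum.swap) (simp add: sum_distrib_left[symmetric])
  also have "\<dots> = 1" using fin by (simp add: sum_pmf_eq_1)
  finally have "(\<Sum>j<n. ?e 0) = 1" using e_eq by (metis (no_types, lifting) lessThan_iff sum.cong)
  then have "real n * ?e 0 = 1" by simp
  then show ?thesis using e_eq[OF j] n by (simp add: field_simps)
qed

lemma sender_util_random_order_unit_types_le:
  assumes "0 < n"
  shows "sender_util n k (random_order n unit_types) (\<lambda>_. 0) abs \<psi> \<le> real k / real n"
proof -
  let ?q = "random_order n unit_types"
  have fin: "finite (set_pmf ?q)" by (rule finite_set_pmf_random_order)
  have post_val_le: "post_val ?q abs \<psi> s j \<le> 1 / n" if "j < n" for s j
  proof -
    have "post_val ?q abs \<psi> s j \<le> (\<Sum>\<theta>\<in>set_pmf ?q. pmf ?q \<theta> * \<bar>\<theta> j\<bar>)"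
      unfolding post_val_finite_support[OF fin]
      by (intro sum_mono mult_left_mono) (auto intro: mult_left_le_one_le pmf_le_1)
    then show ?thesis using sum_pmf_abs_random_order_unit_types[OF that] by simp
  qed
  have "Max (post_val ?q abs \<psi> s ` {..<n}) \<le> 1 / n" for s
    using assms post_val_le by (subst Max_le_iff) auto
  then show ?thesis
    unfolding sender_util_def best_resp_indifferent
    using sum_bounded_above[of "{..<k}" "\<lambda>s. Max (post_val ?q abs \<psi> s ` {..<n})" "1 / n"] by simp
qed

lemma one_le_OPT_random_order_unit_types:
  assumes n: "0 < n"
  shows "1 \<le> OPT n n (random_order n unit_types) (\<lambda>_. 0) abs"
proof -
  let ?q = "random_order n unit_types"
  define pos where "pos \<theta> = (if \<exists>p<n. \<theta> p = (1::real) then LEAST p. \<theta> p = 1 else 0)" for \<theta>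
  define \<phi> where "\<phi> \<theta> = return_pmf (pos \<theta>)" for \<theta>
  have fin: "finite (set_pmf ?q)" by (rule finite_set_pmf_random_order)
  have pos_less: "pos \<theta> < n" for \<theta>
    unfolding pos_def using n by (auto intro: le_less_trans[OF Least_le])
  have pos_unit: "\<bar>\<theta> s\<bar> = (if s = pos \<theta> then 1 else 0)" if "\<theta> \<in> set_pmf ?q" for \<theta> s
    using that n
  proof (rule set_pmf_random_order_unit_types)
    fix p assume "p < n" "\<theta> = (\<lambda>j. if j = p then 1 else 0)"
    moreover from this have "pos \<theta> = p" unfolding pos_def by (auto intro: Least_equality)
    ultimately show ?thesis by simp
  qed
  have "1 = (\<Sum>\<theta>\<in>set_pmf ?q. pmf ?q \<theta>)" using fin by (simp add: sum_pmf_eq_1)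
  also have "\<dots> = (\<Sum>s<n. post_val ?q abs \<phi> s s)"
  proof -
  have "(\<Sum>s<n. post_val ?q abs \<phi> s s) = (\<Sum>\<theta>\<in>set_pmf ?q. pmf ?q \<theta> * (\<Sum>s<n. of_bool (pos \<theta> = s) * \<bar>\<theta> s\<bar>))"
    unfolding post_val_finite_support[OF fin] \<phi>_def sum_distrib_left
    by (subst sum.swap) (simp add: pmf_return indicator_def)
  also have "\<dots> = (\<Sum>\<theta>\<in>set_pmf ?q. pmf ?q \<theta>)"
  proof (intro sum.cong refl)
    fix \<theta> assume "\<theta> \<in> set_pmf ?q"
    then have "(\<Sum>s<n. of_bool (pos \<theta> = s) * \<bar>\<theta> s\<bar>) = (\<Sum>s<n. if s = pos \<theta> then 1 else 0)"
      using pos_unit by (intro sum.cong) auto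
    then show "pmf ?q \<theta> * (\<Sum>s<n. of_bool (pos \<theta> = s) * \<bar>\<theta> s\<bar>) = pmf ?q \<theta>"
      using pos_less[of \<theta>] by simp
  qed
  finally show ?thesis by (rule sym)
  qed
  also have "\<dots> \<le> sender_util n n ?q (\<lambda>_. 0) abs \<phi>"
    unfolding sender_util_def best_resp_indifferent by (intro sum_mono Max_ge) auto
  also have "\<dots> \<le> OPT n n ?q (\<lambda>_. 0) abs"
    using sender_util_random_order_unit_types_le[OF n] pos_less
    by (intro sender_util_le_OPT) (auto simp: is_scheme_def \<phi>_def)
  finally show ?thesis .
qed

lemma OPT_random_order_unit_types_le:
  assumes k: "0 < k" "k \<le> n"
  shows "OPT n k (random_order n unit_types) (\<lambda>_. 0) abs
    \<le> real k / real n * OPT n n (random_order n unit_types) (\<lambda>_. 0) abs"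
proof -
  have n: "0 < n" using k by simp
  have "OPT n k (random_order n unit_types) (\<lambda>_. 0) abs \<le> real k / real n * 1"
    using sender_util_random_order_unit_types_le[OF n] by (intro OPT_le[OF k(1)]) simp
  also have "\<dots> \<le> real k / real n * OPT n n (random_order n unit_types) (\<lambda>_. 0) abs"
    using one_le_OPT_random_order_unit_types[OF n] by (intro mult_left_mono) auto
  finally show ?thesis .
qed

theorem proposition5p1:
  fixes n k :: nat and q :: "(nat \<Rightarrow> 'a) pmf" and \<rho> \<xi> :: "'a \<Rightarrow> real"
  assumes "symmetric_instance n q"
    and "\<forall>t. \<xi> t \<ge> 0"
    and "2 \<le> k" and "k \<le> n"
  shows "(\<exists>\<phi>. symmetric_scheme n n \<phi> \<and> persuasive n n q \<rho> \<phi> \<and>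
              sender_util n n q \<rho> \<xi> \<phi> = OPT n n q \<rho> \<xi>)
       \<and> (\<forall>\<phi>. symmetric_scheme n n \<phi> \<and> persuasive n n q \<rho> \<phi> \<and>
              sender_util n n q \<rho> \<xi> \<phi> = OPT n n q \<rho> \<xi> \<longrightarrow>
              symmetric_scheme n k (imitation k \<phi>) \<and> direct n k (imitation k \<phi>) \<and>
              persuasive n k q \<rho> (imitation k \<phi>) \<and>
              sender_util n k q \<rho> \<xi> (imitation k \<phi>) \<ge> real k / real n * OPT n n q \<rho> \<xi>)
       \<and> (\<forall>n' k'. 2 \<le> k' \<and> k' \<le> n' \<longrightarrow>
            (\<exists>(t :: nat \<Rightarrow> real) (\<rho>' :: real \<Rightarrow> real) (\<xi>' :: real \<Rightarrow> real).
               (\<forall>x. \<xi>' x \<ge> 0) \<and> OPT n' n' (random_order n' t) \<rho>' \<xi>' > 0 \<and>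
               OPT n' k' (random_order n' t) \<rho>' \<xi>' \<le> real k' / real n' * OPT n' n' (random_order n' t) \<rho>' \<xi>'))"
proof (intro conjI allI impI)
  have k: "0 < k" "k \<le> n" using assms(3,4) by simp_all
  show "\<exists>\<phi>. symmetric_scheme n n \<phi> \<and> persuasive n n q \<rho> \<phi> \<and> sender_util n n q \<rho> \<xi> \<phi> = OPT n n q \<rho> \<xi>"
    using optimal_symmetric_scheme_exists[OF assms(1)] k by simp
  fix \<phi> assume \<phi>: "symmetric_scheme n n \<phi> \<and> persuasive n n q \<rho> \<phi> \<and> sender_util n n q \<rho> \<xi> \<phi> = OPT n n q \<rho> \<xi>"
  then show "symmetric_scheme n k (imitation k \<phi>)" "direct n k (imitation k \<phi>)"
    "persuasive n k q \<rho> (imitation k \<phi>)"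
    using symmetric_scheme_imitation[OF _ k] persuasive_imitation[OF assms(1) _ _ k]
    by (auto simp: symmetric_scheme_def)
  show "real k / real n * OPT n n q \<rho> \<xi> \<le> sender_util n k q \<rho> \<xi> (imitation k \<phi>)"
    using sender_util_imitation_ge[OF assms(1) _ _ assms(2-4), of \<phi> \<rho>] \<phi> by simp
next
  fix n' k' :: nat assume "2 \<le> k' \<and> k' \<le> n'"
  then show "\<exists>(t :: nat \<Rightarrow> real) (\<rho>' :: real \<Rightarrow> real) (\<xi>' :: real \<Rightarrow> real).
      (\<forall>x. \<xi>' x \<ge> 0) \<and> OPT n' n' (random_order n' t) \<rho>' \<xi>' > 0 \<and>
      OPT n' k' (random_order n' t) \<rho>' \<xi>' \<le> real k' / real n' * OPT n' n' (random_order n' t) \<rho>' \<xi>'"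
    using one_le_OPT_random_order_unit_types[of n'] OPT_random_order_unit_types_le[of k' n']
    by (intro exI[of _ unit_types] exI[of _ "\<lambda>_. 0"] exI[of _ abs]) auto
qed

end
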